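(* Let $(A,[\cdot,\cdot])$ be an Acaa-algebra over a field $\mathbb K$ of characteristic $0$, and for $X\in A$ let $\mathrm{ad}\,X\in\mathrm{End}(A)$ be $\mathrm{ad}\,X(Y)=[X,Y]$. Then for all $X,Y\in A$: (1) $\mathrm{ad}\,X\circ\mathrm{ad}\,Y+\mathrm{ad}\,Y\circ\mathrm{ad}\,X=0$; (2) $2\,\mathrm{ad}[X,Y]=-\mathrm{ad}\,X\circ\mathrm{ad}\,Y+\mathrm{ad}\,Y\circ\mathrm{ad}\,X=-(\mathrm{ad}\,X\circ\mathrm{ad}\,Y-\mathrm{ad}\,Y\circ\mathrm{ad}\,X)$.
   Context: An Acaa-algebra over a field $\mathbb K$ of characteristic $0$ is a $\mathbb K$-vector space $A$ with a bilinear product $[\cdot,\cdot]$ which is anticommutative, $[x,y]=-[y,x]$, and satisfies $[x_1,[x_2,x_3]]=[x_2,[x_3,x_1]]$ for all $x_1,x_2,x_3\in A$. *)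

theory Defs
  imports Complex_Main
begin

definition acaa_algebra ::
  "('k::field \<Rightarrow> 'a::ab_group_add \<Rightarrow> 'a) \<Rightarrow> ('a \<Rightarrow> 'a \<Rightarrow> 'a) \<Rightarrow> bool" where
  "acaa_algebra scale br \<longleftrightarrow>
     vector_space scale \<and>
     (\<forall>x. Vector_Spaces.linear scale scale (br x)) \<and>
     (\<forall>y. Vector_Spaces.linear scale scale (\<lambda>x. br x y)) \<and>
     (\<forall>x y. br x y = - br y x) \<and>
     (\<forall>x1 x2 x3. br x1 (br x2 x3) = br x2 (br x3 x1))"

definition ad :: "('a \<Rightarrow> 'a \<Rightarrow> 'a) \<Rightarrow> 'a \<Rightarrow> 'a \<Rightarrow> 'a" where
  "ad br X = (\<lambda>Y. br X Y)"

end

theory Submission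
  imports Defs
begin

text \<open>Anticommutativity turns the cyclic identity into [Y,[X,Z]] = -[X,[Y,Z]], i.e. the
operators ad X and ad Y anticommute, and into [[X,Y],Z] = -[X,[Y,Z]]. Applying the latter to
one copy of [[X,Y],Z] + [[X,Y],Z] and then the former gives -[X,[Y,Z]] + [Y,[X,Z]].\<close>

lemma acaa_algebraD:
  assumes "acaa_algebra scale br"
  shows acaa_algebra_vector_space: "vector_space scale"
    and acaa_algebra_linear_right: "Vector_Spaces.linear scale scale (br x)"
    and acaa_algebra_anticomm: "br x y = - br y x"
    and acaa_algebra_cyclic: "br x1 (br x2 x3) = br x2 (br x3 x1)"
  using assms unfolding acaa_algebra_def by blast+

lemma acaa_algebra_minus_right:
  assumes "acaa_algebra scale br"
  shows "br x (- y) = - br x y"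
  using acaa_algebra_linear_right[OF assms] by (metis module_hom.neg linear_iff_module_hom)

lemma acaa_algebra_ad_anticomm:
  assumes "acaa_algebra scale br"
  shows "br y (br x z) = - br x (br y z)"
proof -
  have "br y (br x z) = br y (- br z x)"
    by (simp add: acaa_algebra_anticomm[OF assms, of x z])
  also have "\<dots> = - br y (br z x)"
    by (rule acaa_algebra_minus_right[OF assms])
  also have "br y (br z x) = br x (br y z)"
    by (rule acaa_algebra_cyclic[OF assms, symmetric])
  finally show ?thesis .
qed

lemma acaa_algebra_bracket_left:
  assumes "acaa_algebra scale br"
  shows "br (br x y) z = - br x (br y z)"
proof -
  have "br (br x y) z = - br z (br x y)"
    by (rule acaa_algebra_anticomm[OF assms])
  also have "br z (br x y) = br x (br y z)"
    by (rule acaa_algebra_cyclic[OF assms])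
  finally show ?thesis .
qed

lemma (in vector_space) scale_two: "scale 2 v = v + v"
  by (metis one_add_one scale_left_distrib scale_one)

theorem mainTheorem7:
  fixes scale :: "'k::field_char_0 \<Rightarrow> 'a::ab_group_add \<Rightarrow> 'a"
    and br :: "'a \<Rightarrow> 'a \<Rightarrow> 'a"
  assumes "acaa_algebra scale br"
  shows "\<forall>X Y.
     (\<lambda>Z. (ad br X \<circ> ad br Y) Z + (ad br Y \<circ> ad br X) Z) = (\<lambda>Z. 0) \<and>
     (\<lambda>Z. scale 2 (ad br (br X Y) Z)) = (\<lambda>Z. - (ad br X \<circ> ad br Y) Z + (ad br Y \<circ> ad br X) Z) \<and>
     (\<lambda>Z. - (ad br X \<circ> ad br Y) Z + (ad br Y \<circ> ad br X) Z)
        = (\<lambda>Z. - ((ad br X \<circ> ad br Y) Z - (ad br Y \<circ> ad br X) Z))"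
proof (intro allI conjI)
  fix X Y
  note ad_anticomm = acaa_algebra_ad_anticomm[OF assms]
  show "(\<lambda>Z. (ad br X \<circ> ad br Y) Z + (ad br Y \<circ> ad br X) Z) = (\<lambda>Z. 0)"
    by (simp add: fun_eq_iff ad_def ad_anticomm[of Y X])
  have "scale 2 (br (br X Y) Z) = - br X (br Y Z) + br Y (br X Z)" for Z
    unfolding vector_space.scale_two[OF acaa_algebra_vector_space[OF assms]]
      acaa_algebra_bracket_left[OF assms] ad_anticomm[of Y X] ..
  then show "(\<lambda>Z. scale 2 (ad br (br X Y) Z)) = (\<lambda>Z. - (ad br X \<circ> ad br Y) Z + (ad br Y \<circ> ad br X) Z)"
    by (simp add: fun_eq_iff ad_def)
  show "(\<lambda>Z. - (ad br X \<circ> ad br Y) Z + (ad br Y \<circ> ad br X) Z)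
      = (\<lambda>Z. - ((ad br X \<circ> ad br Y) Z - (ad br Y \<circ> ad br X) Z))"
    by (simp add: fun_eq_iff)
qed

end
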